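(* For real $r,\omega$ with $\sinh^22r+\sin^22\omega>0$ define $$\rho^{\natural}(r,\omega)=\frac{\cosh2r-\cos2\omega}{\cosh2r+\cos2\omega},$$ and $\theta^{\natural}(r,\omega)$ (mod $2\pi$) by $$\cos\theta^{\natural}=\frac{\sinh^22r-\sin^22\omega}{\sinh^22r+\sin^22\omega},\qquad \sin\theta^{\natural}=\frac{2\sinh2r\sin2\omega}{\sinh^22r+\sin^22\omega}$$ (so that $\tan(\theta^{\natural}/2)=\sin2\omega/\sinh2r$), and for $\phi\in\mathbb{R}$ set $\mathrm{trh}^{\natural}(r,\omega;\phi)=\rho^{\natural}(r,\omega)\cos(\phi+\theta^{\natural}(r,\omega))$. Then for $|r|<1$ and all $i,j\ge0$, uniformly in $\phi$, $$\frac{\partial^{i+j}\,\mathrm{trh}^{\natural}(r,\omega;\phi)}{\partial r^i\partial\omega^j}\ll_{i,j}\frac{\rho^{\natural}(r,\omega)}{(\cosh^22r-\cos^22\omega)^{(i+j)/2}}.$$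
   Context: Note that $\cosh^22r-\cos^22\omega=\sinh^22r+\sin^22\omega$. *)

theory Defs
  imports "HOL-Analysis.Analysis"
begin

definition rho_nat :: "real \<Rightarrow> real \<Rightarrow> real" where
  "rho_nat r w = (cosh (2*r) - cos (2*w)) / (cosh (2*r) + cos (2*w))"

definition theta_nat :: "real \<Rightarrow> real \<Rightarrow> real" where
  "theta_nat r w = (SOME t. 0 \<le> t \<and> t < 2*pi \<and>
      cos t = ((sinh (2*r))^2 - (sin (2*w))^2) / ((sinh (2*r))^2 + (sin (2*w))^2) \<and>
      sin t = 2 * sinh (2*r) * sin (2*w) / ((sinh (2*r))^2 + (sin (2*w))^2))"

definition trh_nat :: "real \<Rightarrow> real \<Rightarrow> real \<Rightarrow> real" where
  "trh_nat r w phi = rho_nat r w * cos (phi + theta_nat r w)"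

definition mixed_pderiv :: "nat \<Rightarrow> nat \<Rightarrow> (real \<Rightarrow> real \<Rightarrow> real) \<Rightarrow> real \<Rightarrow> real \<Rightarrow> real" where
  "mixed_pderiv i j F r w = (deriv ^^ i) (\<lambda>s. (deriv ^^ j) (\<lambda>v. F s v) w) r"

end

theory Submission
  imports Defs "HOL-Complex_Analysis.Complex_Analysis"
begin

(* With z = r + i w one has tanh z = (sinh 2r + i sin 2w) / (cosh 2r + cos 2w), hence
   tanh^2 z = rho e^(i theta), trh(r, w; phi) = Re (e^(i phi) tanh^2 z) and
   |sinh 2z|^2 = cosh^2 2r - cos^2 2w.  Since G = tanh^2 is holomorphic, the Cauchy-Riemann
   equations give d_r^i d_w^j trh = Re (e^(i phi) i^j G^(i+j)(z)), so it suffices to show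
   |G^(n)(z)| <= C |tanh z|^2 / |sinh 2z|^n.  Now G^(n) = P_n(tanh) for a polynomial P_n of
   degree at most n + 2, so |G^(n)(z)| <= K (1 + t)^(n+2) with t = |tanh z|.  With
   k = |cosh z|^2 one has |sinh 2z| = 2tk and k (1 + t)^2 <= 2 (|cosh z|^2 + |sinh z|^2) = 2 cosh 2r,
   which is bounded for |r| < 1; this turns the polynomial bound into the claimed one for n >= 2,
   while n = 0 and n = 1 are explicit. *)

lemma cosh_Complex: "cosh (Complex x y) = Complex (cosh x * cos y) (sinh x * sin y)"
  by (simp add: cosh_def sinh_def exp_eq_polar complex_eq_iff field_simps)

lemma sinh_Complex: "sinh (Complex x y) = Complex (sinh x * cos y) (cosh x * sin y)"
  by (simp add: cosh_def sinh_def exp_eq_polar complex_eq_iff field_simps)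

lemma norm_cosh_Complex_sq: "(cmod (cosh (Complex x y)))\<^sup>2 = (cosh (2*x) + cos (2*y)) / 2"
  unfolding cosh_Complex cmod_power2 complex.sel cosh_double cos_double
  using cosh_square_eq[of x] sin_cos_squared_add[of y] by algebra

lemma norm_sinh_Complex_sq: "(cmod (sinh (Complex x y)))\<^sup>2 = (cosh (2*x) - cos (2*y)) / 2"
  unfolding sinh_Complex cmod_power2 complex.sel cosh_double cos_double
  using cosh_square_eq[of x] sin_cos_squared_add[of y] by algebra

lemma norm_cosh_sq_add_norm_sinh_sq: "(cmod (cosh z))\<^sup>2 + (cmod (sinh z))\<^sup>2 = cosh (2 * Re z)"
  using norm_cosh_Complex_sq[of "Re z" "Im z"] norm_sinh_Complex_sq[of "Re z" "Im z"] by simp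

lemma norm_sinh_double_Complex_sq:
  "(cmod (sinh (2 * Complex x y)))\<^sup>2 = (cosh (2*x))\<^sup>2 - (cos (2*y))\<^sup>2"
proof -
  have "(cmod (sinh (2 * Complex x y)))\<^sup>2 = 4 * (cmod (sinh (Complex x y)))\<^sup>2 * (cmod (cosh (Complex x y)))\<^sup>2"
    by (simp only: sinh_double norm_mult power_mult_distrib) simp
  also have "\<dots> = (cosh (2*x))\<^sup>2 - (cos (2*y))\<^sup>2"
    unfolding norm_sinh_Complex_sq norm_cosh_Complex_sq by algebra
  finally show ?thesis .
qed

lemma sinh_sq_add_sin_sq: "(sinh x)\<^sup>2 + (sin y)\<^sup>2 = (cosh x)\<^sup>2 - (cos y)\<^sup>2" for x y :: real
  using cosh_square_eq[of x] sin_cos_squared_add[of y] by linarith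

lemma sinh_double_Complex_nonzero_iff:
  "sinh (2 * Complex x y) \<noteq> 0 \<longleftrightarrow> (sinh (2*x))\<^sup>2 + (sin (2*y))\<^sup>2 > 0"
proof -
  have norm_sq: "(cmod (sinh (2 * Complex x y)))\<^sup>2 = (sinh (2*x))\<^sup>2 + (sin (2*y))\<^sup>2"
    by (simp add: norm_sinh_double_Complex_sq sinh_sq_add_sin_sq)
  show ?thesis
    by (simp flip: norm_sq)
qed

lemma rho_nat_eq_norm_tanh_sq: "rho_nat x y = (cmod (tanh (Complex x y)))\<^sup>2"
  unfolding tanh_def norm_divide power_divide norm_sinh_Complex_sq norm_cosh_Complex_sq rho_nat_def
  by (simp add: field_split_simps)

lemma theta_nat_cos_sin:
  assumes "(sinh (2*x))\<^sup>2 + (sin (2*y))\<^sup>2 > 0"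
  shows "cos (theta_nat x y) = ((sinh (2*x))\<^sup>2 - (sin (2*y))\<^sup>2) / ((sinh (2*x))\<^sup>2 + (sin (2*y))\<^sup>2)"
    and "sin (theta_nat x y) = 2 * sinh (2*x) * sin (2*y) / ((sinh (2*x))\<^sup>2 + (sin (2*y))\<^sup>2)"
proof -
  define a b where "a = sinh (2*x)" and "b = sin (2*y)"
  have "a\<^sup>2 + b\<^sup>2 \<noteq> 0"
    using assms unfolding a_def b_def by linarith
  moreover have "(a\<^sup>2 - b\<^sup>2)\<^sup>2 + (2*a*b)\<^sup>2 = (a\<^sup>2 + b\<^sup>2)\<^sup>2"
    by algebra
  ultimately have "((a\<^sup>2 - b\<^sup>2) / (a\<^sup>2 + b\<^sup>2))\<^sup>2 + (2*a*b / (a\<^sup>2 + b\<^sup>2))\<^sup>2 = 1"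
    by (simp add: power_divide flip: add_divide_distrib)
  then obtain t where "0 \<le> t" "t < 2*pi"
      "(a\<^sup>2 - b\<^sup>2) / (a\<^sup>2 + b\<^sup>2) = cos t" "2*a*b / (a\<^sup>2 + b\<^sup>2) = sin t"
    by (rule sincos_total_2pi)
  then have "\<exists>t. 0 \<le> t \<and> t < 2*pi \<and>
      cos t = (a\<^sup>2 - b\<^sup>2) / (a\<^sup>2 + b\<^sup>2) \<and> sin t = 2*a*b / (a\<^sup>2 + b\<^sup>2)"
    by metis
  from someI_ex[OF this] show
      "cos (theta_nat x y) = ((sinh (2*x))\<^sup>2 - (sin (2*y))\<^sup>2) / ((sinh (2*x))\<^sup>2 + (sin (2*y))\<^sup>2)"
    and "sin (theta_nat x y) = 2 * sinh (2*x) * sin (2*y) / ((sinh (2*x))\<^sup>2 + (sin (2*y))\<^sup>2)"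
    unfolding theta_nat_def a_def b_def by auto
qed

lemma sinh_mult_cnj_cosh_Complex:
  "sinh (Complex x y) * cnj (cosh (Complex x y)) = Complex (sinh (2*x) / 2) (sin (2*y) / 2)"
  unfolding sinh_Complex cosh_Complex complex_eq_iff sinh_double sin_double
  using cosh_square_eq[of x] sin_cos_squared_add[of y]
  by (simp, intro conjI; algebra)

lemma tanh_sq_Complex:
  assumes "(sinh (2*x))\<^sup>2 + (sin (2*y))\<^sup>2 > 0"
  shows "(tanh (Complex x y))\<^sup>2 = rho_nat x y * cis (theta_nat x y)"
proof -
  define a b E F where "a = sinh (2*x)" and "b = sin (2*y)"
    and "E = cosh (2*x) + cos (2*y)" and "F = cosh (2*x) - cos (2*y)"
  have FE: "a\<^sup>2 + b\<^sup>2 = F * E"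
    using sinh_sq_add_sin_sq[of "2*x" "2*y"] by (simp add: a_def b_def E_def F_def power2_eq_square algebra_simps)
  then have "F \<noteq> 0" "E \<noteq> 0"
    using assms a_def b_def by auto
  have "tanh (Complex x y) = Complex (a/2) (b/2) / of_real (E/2)"
    unfolding tanh_def complex_div_cnj[of "sinh _"] sinh_mult_cnj_cosh_Complex norm_cosh_Complex_sq
    by (simp add: a_def b_def E_def)
  also have "\<dots> = Complex (a/E) (b/E)"
    by (simp add: complex_eq_iff)
  finally have sq: "(tanh (Complex x y))\<^sup>2 = Complex ((a\<^sup>2 - b\<^sup>2) / E\<^sup>2) (2*a*b / E\<^sup>2)"
    by (simp add: complex_eq_iff power2_eq_square diff_divide_distrib)
  have "cos (theta_nat x y) = (a\<^sup>2 - b\<^sup>2) / (F * E)" "sin (theta_nat x y) = 2*a*b / (F * E)"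
    using theta_nat_cos_sin[OF assms] by (simp_all add: FE flip: a_def b_def)
  with \<open>F \<noteq> 0\<close> \<open>E \<noteq> 0\<close> show ?thesis
    unfolding sq rho_nat_def
    by (simp add: complex_eq_iff flip: E_def F_def) (simp add: field_simps power2_eq_square)
qed

lemma trh_nat_eq_Re_tanh_sq:
  assumes "(sinh (2*x))\<^sup>2 + (sin (2*y))\<^sup>2 > 0"
  shows "trh_nat x y phi = Re (cis phi * (tanh (Complex x y))\<^sup>2)"
  unfolding tanh_sq_Complex[OF assms] trh_nat_def by (simp add: mult.left_commute cis_mult cos_add algebra_simps)

lemma higher_deriv_Re_along_line:
  fixes G :: "complex \<Rightarrow> complex"
  assumes hol: "G holomorphic_on S" and "open S" and "p + of_real t * q \<in> S"
  shows "(deriv ^^ n) (\<lambda>t. Re (c * G (p + of_real t * q))) t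
           = Re (c * q ^ n * (deriv ^^ n) G (p + of_real t * q))"
  using assms(3)
proof (induction n arbitrary: t)
  case (Suc n)
  define Gn where "Gn = (deriv ^^ n) G"
  have "((\<lambda>s. p + of_real s * q) \<longlongrightarrow> p + of_real t * q) (nhds t)"
    by (intro tendsto_intros filterlim_ident)
  then have "eventually (\<lambda>s. p + of_real s * q \<in> S) (nhds t)"
    using \<open>open S\<close> Suc.prems by (rule topological_tendstoD)
  then have "eventually (\<lambda>s. (deriv ^^ n) (\<lambda>t. Re (c * G (p + of_real t * q))) s
               = Re (c * q ^ n * Gn (p + of_real s * q))) (nhds t)"
    by (rule eventually_mono) (simp only: Suc.IH Gn_def)
  then have "(deriv ^^ Suc n) (\<lambda>t. Re (c * G (p + of_real t * q))) t
               = deriv (\<lambda>s. Re (c * q ^ n * Gn (p + of_real s * q))) t"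
    by (simp add: deriv_cong_ev)
  also have "\<dots> = Re (c * q ^ n * (deriv Gn (p + of_real t * q) * q))"
  proof (intro DERIV_imp_deriv has_field_derivative_Re has_vector_derivative_real_field)
    have "(Gn has_field_derivative deriv Gn (p + of_real t * q)) (at (p + of_real t * q))"
      unfolding Gn_def using holomorphic_higher_deriv[OF hol \<open>open S\<close>] \<open>open S\<close> Suc.prems
      by (rule holomorphic_derivI)
    then show "((\<lambda>x. c * q ^ n * Gn (p + x * q)) has_field_derivative
                 c * q ^ n * (deriv Gn (p + of_real t * q) * q)) (at (of_real t))"
      by (auto intro!: derivative_eq_intros DERIV_chain2[where f = Gn])
  qed
  also have "\<dots> = Re (c * q ^ Suc n * (deriv ^^ Suc n) G (p + of_real t * q))"
    by (simp add: Gn_def algebra_simps)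
  finally show ?case .
qed simp

lemma mixed_pderiv_Re_holomorphic:
  fixes G :: "complex \<Rightarrow> complex"
  assumes hol: "G holomorphic_on S" and "open S" and "Complex r w \<in> S"
  shows "mixed_pderiv i j (\<lambda>s v. Re (c * G (Complex s v))) r w
           = Re (c * \<i> ^ j * (deriv ^^ (i + j)) G (Complex r w))"
proof -
  have horizontal: "Complex s v = \<i> * of_real v + of_real s * 1"
   and vertical: "Complex s v = of_real s + of_real v * \<i>" for s v
    by (simp_all add: complex_eq_iff)
  have inner: "(deriv ^^ j) (\<lambda>v. Re (c * G (Complex s v))) w
                 = Re (c * \<i> ^ j * (deriv ^^ j) G (\<i> * of_real w + of_real s * 1))"
    if "Complex s w \<in> S" for s
    using higher_deriv_Re_along_line[OF hol \<open>open S\<close>, of "of_real s" w \<i> j c] that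
    by (simp only: vertical horizontal[of s w, symmetric])
  have "((\<lambda>s. \<i> * of_real w + of_real s * 1) \<longlongrightarrow> \<i> * of_real w + of_real r * 1) (nhds r)"
    by (intro tendsto_intros filterlim_ident)
  then have "eventually (\<lambda>s. \<i> * of_real w + of_real s * 1 \<in> S) (nhds r)"
    using \<open>open S\<close> \<open>Complex r w \<in> S\<close> unfolding horizontal by (rule topological_tendstoD)
  then have "eventually (\<lambda>s. (deriv ^^ j) (\<lambda>v. Re (c * G (Complex s v))) w
               = Re (c * \<i> ^ j * (deriv ^^ j) G (\<i> * of_real w + of_real s * 1))) (nhds r)"
    by (rule eventually_mono) (simp only: inner flip: horizontal)
  then have "mixed_pderiv i j (\<lambda>s v. Re (c * G (Complex s v))) r w
      = (deriv ^^ i) (\<lambda>s. Re (c * \<i> ^ j * (deriv ^^ j) G (\<i> * of_real w + of_real s * 1))) r"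
    unfolding mixed_pderiv_def by (rule higher_deriv_cong_ev) simp
  also have "\<dots> = Re (c * \<i> ^ j * (deriv ^^ (i + j)) G (Complex r w))"
    using higher_deriv_Re_along_line[OF holomorphic_higher_deriv[OF hol \<open>open S\<close>, where n = j]
        \<open>open S\<close> \<open>Complex r w \<in> S\<close>[unfolded horizontal], of i "c * \<i> ^ j"]
    unfolding horizontal[symmetric] by (simp add: funpow_add)
  finally show ?thesis .
qed

lemma mixed_pderiv_cong_ev:
  assumes "eventually (\<lambda>(s, v). F s v = H s v) (nhds (r, w))"
  shows "mixed_pderiv i j F r w = mixed_pderiv i j H r w"
proof -
  obtain P Q where "eventually P (nhds r)" "eventually Q (nhds w)"
      and PQ: "\<And>s v. P s \<Longrightarrow> Q v \<Longrightarrow> F s v = H s v"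
    using assms unfolding nhds_prod eventually_prod_filter by auto
  from \<open>eventually P (nhds r)\<close>
  have "eventually (\<lambda>s. (deriv ^^ j) (\<lambda>v. F s v) w = (deriv ^^ j) (\<lambda>v. H s v) w) (nhds r)"
    by (rule eventually_mono)
      (use \<open>eventually Q (nhds w)\<close> PQ in \<open>auto intro!: higher_deriv_cong_ev elim: eventually_mono\<close>)
  then show ?thesis
    unfolding mixed_pderiv_def by (rule higher_deriv_cong_ev) simp
qed

lemma mixed_pderiv_trh_nat:
  assumes pos: "(sinh (2*r))\<^sup>2 + (sin (2*w))\<^sup>2 > 0"
  shows "mixed_pderiv i j (\<lambda>s v. trh_nat s v phi) r w
           = Re (cis phi * \<i> ^ j * (deriv ^^ (i + j)) (\<lambda>z. (tanh z)\<^sup>2) (Complex r w))"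
proof -
  have "open {p :: real \<times> real. 0 < (sinh (2 * fst p))\<^sup>2 + (sin (2 * snd p))\<^sup>2}" (is "open ?T")
    by (intro open_Collect_less continuous_intros)
  then have "eventually (\<lambda>p. p \<in> ?T) (nhds (r, w))"
    using eventually_nhds_in_open[of ?T "(r, w)"] pos by simp
  then have "eventually (\<lambda>(s, v). trh_nat s v phi = Re (cis phi * (tanh (Complex s v))\<^sup>2)) (nhds (r, w))"
    by (rule eventually_mono) (auto simp: trh_nat_eq_Re_tanh_sq)
  then have "mixed_pderiv i j (\<lambda>s v. trh_nat s v phi) r w
      = mixed_pderiv i j (\<lambda>s v. Re (cis phi * (tanh (Complex s v))\<^sup>2)) r w"
    by (rule mixed_pderiv_cong_ev)
  also have "\<dots> = Re (cis phi * \<i> ^ j * (deriv ^^ (i + j)) (\<lambda>z. (tanh z)\<^sup>2) (Complex r w))"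
  proof (rule mixed_pderiv_Re_holomorphic)
    show "(\<lambda>z. (tanh z)\<^sup>2) holomorphic_on {z. cosh z \<noteq> 0}"
      by (auto intro!: analytic_imp_holomorphic analytic_intros)
    show "open {z :: complex. cosh z \<noteq> 0}"
      by (intro open_Collect_neq continuous_intros)
    have "sinh (2 * Complex r w) \<noteq> 0"
      using pos by (simp add: sinh_double_Complex_nonzero_iff)
    then show "Complex r w \<in> {z. cosh z \<noteq> 0}"
      by (auto simp: sinh_double)
  qed
  finally show ?thesis .
qed

(* the recurrence is the chain rule with tanh' = 1 - tanh^2 *)
primrec tanh_sq_deriv_poly :: "nat \<Rightarrow> complex poly" where
  "tanh_sq_deriv_poly 0 = [:0, 0, 1:]"
| "tanh_sq_deriv_poly (Suc n) = pderiv (tanh_sq_deriv_poly n) * [:1, 0, -1:]"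

lemma degree_tanh_sq_deriv_poly: "degree (tanh_sq_deriv_poly n) \<le> n + 2"
proof (induction n)
  case (Suc n)
  have "degree (tanh_sq_deriv_poly (Suc n)) \<le> degree (pderiv (tanh_sq_deriv_poly n)) + 2"
    using degree_mult_le[of "pderiv (tanh_sq_deriv_poly n)" "[:1, 0, -1::complex:]"] by simp
  with Suc.IH show ?case
    by (simp add: degree_pderiv)
qed simp

lemma higher_deriv_tanh_sq:
  fixes z :: complex
  assumes "cosh z \<noteq> 0"
  shows "(deriv ^^ n) (\<lambda>z. (tanh z)\<^sup>2) z = poly (tanh_sq_deriv_poly n) (tanh z)"
  using assms
proof (induction n arbitrary: z)
  case (Suc n)
  have "open {z :: complex. cosh z \<noteq> 0}"
    by (intro open_Collect_neq continuous_intros)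
  then have "eventually (\<lambda>y. cosh y \<noteq> 0) (nhds z)"
    using Suc.prems by (auto dest: eventually_nhds_in_open)
  then have "(deriv ^^ Suc n) (\<lambda>z. (tanh z)\<^sup>2) z = deriv (\<lambda>y. poly (tanh_sq_deriv_poly n) (tanh y)) z"
    by (simp add: deriv_cong_ev eventually_mono Suc.IH)
  also have "\<dots> = poly (pderiv (tanh_sq_deriv_poly n)) (tanh z) * (1 - (tanh z)\<^sup>2)"
    using Suc.prems by (intro DERIV_imp_deriv) (auto intro!: derivative_eq_intros)
  also have "\<dots> = poly (tanh_sq_deriv_poly (Suc n)) (tanh z)"
    by (simp add: algebra_simps power2_eq_square)
  finally show ?case .
qed (simp add: power2_eq_square)

lemma norm_poly_le:
  fixes p :: "'a :: real_normed_field poly"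
  shows "norm (poly p x) \<le> (\<Sum>i\<le>degree p. norm (coeff p i)) * (1 + norm x) ^ degree p"
proof -
  have "norm (poly p x) \<le> (\<Sum>i\<le>degree p. norm (coeff p i * x ^ i))"
    unfolding poly_altdef by (rule norm_sum)
  also have "\<dots> \<le> (\<Sum>i\<le>degree p. norm (coeff p i) * (1 + norm x) ^ degree p)"
  proof (intro sum_mono)
    fix i assume "i \<in> {..degree p}"
    then have "norm x ^ i \<le> (1 + norm x) ^ degree p"
      by (intro order.trans[OF power_mono power_increasing]) auto
    then show "norm (coeff p i * x ^ i) \<le> norm (coeff p i) * (1 + norm x) ^ degree p"
      by (simp add: norm_mult norm_power mult_left_mono)
  qed
  finally show ?thesis
    by (simp add: sum_distrib_right)
qed

lemma norm_higher_deriv_tanh_sq_le_poly: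
  "\<exists>K \<ge> 0. \<forall>z. cosh z \<noteq> 0 \<longrightarrow>
     cmod ((deriv ^^ n) (\<lambda>z. (tanh z)\<^sup>2) z) \<le> K * (1 + cmod (tanh z)) ^ (n + 2)"
proof -
  define K where "K = (\<Sum>i\<le>degree (tanh_sq_deriv_poly n). cmod (coeff (tanh_sq_deriv_poly n) i))"
  have "K \<ge> 0"
    unfolding K_def by (simp add: sum_nonneg)
  moreover have "cmod ((deriv ^^ n) (\<lambda>z. (tanh z)\<^sup>2) z) \<le> K * (1 + cmod (tanh z)) ^ (n + 2)"
    if "cosh z \<noteq> 0" for z
  proof -
    have "(1 + cmod (tanh z)) ^ degree (tanh_sq_deriv_poly n) \<le> (1 + cmod (tanh z)) ^ (n + 2)"
      using degree_tanh_sq_deriv_poly[of n] by (intro power_increasing) auto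
    then show ?thesis
      using norm_poly_le[of "tanh_sq_deriv_poly n" "tanh z"] \<open>K \<ge> 0\<close>
      unfolding higher_deriv_tanh_sq[OF that] K_def[symmetric]
      by (meson mult_left_mono order.trans)
  qed
  ultimately show ?thesis
    by blast
qed

lemma norm_tanh_mult_norm_cosh:
  fixes z :: complex
  assumes "cosh z \<noteq> 0"
  shows "cmod (tanh z) * cmod (cosh z) = cmod (sinh z)"
  using assms by (simp add: tanh_def norm_divide)

lemma norm_sinh_double_eq:
  fixes z :: complex
  assumes "cosh z \<noteq> 0"
  shows "cmod (sinh (2 * z)) = 2 * cmod (tanh z) * (cmod (cosh z))\<^sup>2"
proof -
  have "cmod (sinh (2 * z)) = 2 * cmod (sinh z) * cmod (cosh z)"
    by (simp add: sinh_double norm_mult)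
  then show ?thesis
    by (simp add: norm_tanh_mult_norm_cosh[OF assms, symmetric] power2_eq_square)
qed

lemma norm_cosh_sq_mult_le:
  fixes z :: complex
  assumes "cosh z \<noteq> 0"
  shows "(cmod (cosh z))\<^sup>2 * (1 + cmod (tanh z))\<^sup>2 \<le> 2 * cosh (2 * Re z)"
proof -
  define t k where "t = cmod (tanh z)" and "k = (cmod (cosh z))\<^sup>2"
  have "k * t\<^sup>2 = (cmod (sinh z))\<^sup>2"
    unfolding t_def k_def norm_tanh_mult_norm_cosh[OF assms, symmetric] by (simp add: power_mult_distrib)
  then have "k + k * t\<^sup>2 = cosh (2 * Re z)"
    using norm_cosh_sq_add_norm_sinh_sq[of z] by (simp add: k_def)
  moreover have "(1 + t)\<^sup>2 = 2 * (1 + t\<^sup>2) - (1 - t)\<^sup>2"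
    by (simp add: power2_eq_square algebra_simps)
  then have "k * (1 + t)\<^sup>2 \<le> k * (2 * (1 + t\<^sup>2))"
    by (intro mult_left_mono) (auto simp: k_def)
  ultimately show ?thesis
    unfolding t_def[symmetric] k_def[symmetric] by (simp add: algebra_simps)
qed

lemma cosh_double_Re_le:
  fixes z :: complex
  assumes "\<bar>Re z\<bar> \<le> 1"
  shows "cosh (2 * Re z) \<le> cosh 2"
proof -
  have "cosh (2 * Re z) = cosh \<bar>2 * Re z\<bar>"
    by simp
  also have "\<dots> \<le> cosh 2"
    using assms by (subst cosh_real_nonneg_le_iff) auto
  finally show ?thesis .
qed

lemma power_mult_power_le:
  fixes t k B :: real
  assumes "t > 0" and "k > 0" and B: "k * (1 + t)\<^sup>2 \<le> B" and "2 \<le> n"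
  shows "(1 + t) ^ (n + 2) * (t * k) ^ n \<le> t\<^sup>2 * B ^ n"
proof -
  obtain m where n: "n = m + 2"
    using \<open>2 \<le> n\<close> by (metis add.commute le_Suc_ex)
  have "(1 + t) ^ (n + 2) * (t * k) ^ n = t\<^sup>2 * (t ^ m * (1 + t) ^ (n + 2) * k ^ n)"
    by (simp add: n power_mult_distrib power_add power2_eq_square)
  also have "\<dots> \<le> t\<^sup>2 * ((1 + t) ^ m * (1 + t) ^ (n + 2) * k ^ n)"
    using assms by (intro mult_left_mono mult_right_mono power_mono) auto
  also have "\<dots> = t\<^sup>2 * (k * (1 + t)\<^sup>2) ^ n"
  proof -
    have "m + (n + 2) = 2 * n"
      using n by simp
    then have "(1 + t) ^ m * (1 + t) ^ (n + 2) = ((1 + t)\<^sup>2) ^ n"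
      by (simp only: power_add[symmetric] power_mult[symmetric])
    then show ?thesis
      by (simp add: power_mult_distrib mult_ac)
  qed
  also have "\<dots> \<le> t\<^sup>2 * B ^ n"
    using assms by (intro mult_left_mono power_mono) auto
  finally show ?thesis .
qed

lemma norm_higher_deriv_tanh_sq_le:
  "\<exists>C. \<forall>z. \<bar>Re z\<bar> \<le> 1 \<longrightarrow> sinh (2 * z) \<noteq> 0 \<longrightarrow>
     cmod ((deriv ^^ n) (\<lambda>z. (tanh z)\<^sup>2) z) \<le> C * (cmod (tanh z))\<^sup>2 / (cmod (sinh (2 * z))) ^ n"
proof -
  have nonzero: "cosh z \<noteq> 0" "tanh z \<noteq> 0" if "sinh (2 * z) \<noteq> 0" for z :: complex
    using that by (auto simp: sinh_double tanh_def)
  consider "n = 0" | "n = 1" | "2 \<le> n"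
    by linarith
  then show ?thesis
  proof cases
    case 1
    then show ?thesis
      by (intro exI[of _ 1]) (simp add: norm_power)
  next
    case 2
    have "cmod ((deriv ^^ n) (\<lambda>z. (tanh z)\<^sup>2) z) = 4 * (cmod (tanh z))\<^sup>2 / cmod (sinh (2 * z))"
      if "sinh (2 * z) \<noteq> 0" for z
    proof -
      have "1 - (tanh z)\<^sup>2 = ((cosh z)\<^sup>2 - (sinh z)\<^sup>2) / (cosh z)\<^sup>2"
        using nonzero(1)[OF that] by (simp add: tanh_def field_simps)
      then have "1 - (tanh z)\<^sup>2 = 1 / (cosh z)\<^sup>2"
        by (simp add: hyperbolic_pythagoras)
      moreover have "(deriv ^^ n) (\<lambda>z. (tanh z)\<^sup>2) z = 2 * tanh z * (1 - (tanh z)\<^sup>2)"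
        unfolding 2 higher_deriv_tanh_sq[OF nonzero(1)[OF that]]
        by (simp add: pderiv_pCons algebra_simps power2_eq_square)
      ultimately have "(deriv ^^ n) (\<lambda>z. (tanh z)\<^sup>2) z = 2 * tanh z / (cosh z)\<^sup>2"
        by simp
      then show ?thesis
        using nonzero[OF that] by (simp add: norm_sinh_double_eq norm_divide norm_mult norm_power
            power2_eq_square)
    qed
    then show ?thesis
      using 2 by (intro exI[of _ 4]) simp
  next
    case 3
    obtain K where "K \<ge> 0" and K: "\<And>z. cosh z \<noteq> 0 \<Longrightarrow>
        cmod ((deriv ^^ n) (\<lambda>z. (tanh z)\<^sup>2) z) \<le> K * (1 + cmod (tanh z)) ^ (n + 2)"
      using norm_higher_deriv_tanh_sq_le_poly by blast
    define B :: real where "B = 2 * cosh 2"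
    have "cmod ((deriv ^^ n) (\<lambda>z. (tanh z)\<^sup>2) z)
            \<le> K * (2 * B) ^ n * (cmod (tanh z))\<^sup>2 / (cmod (sinh (2 * z))) ^ n"
      if "\<bar>Re z\<bar> \<le> 1" "sinh (2 * z) \<noteq> 0" for z
    proof -
      define t k where "t = cmod (tanh z)" and "k = (cmod (cosh z))\<^sup>2"
      have "t > 0" "k > 0"
        using nonzero[OF that(2)] by (simp_all add: t_def k_def)
      have bound: "cmod ((deriv ^^ n) (\<lambda>z. (tanh z)\<^sup>2) z) \<le> K * (1 + t) ^ (n + 2)"
        unfolding t_def by (rule K[OF nonzero(1)[OF that(2)]])
      have "k * (1 + t)\<^sup>2 \<le> B"
        using norm_cosh_sq_mult_le[OF nonzero(1)[OF that(2)]] cosh_double_Re_le[OF that(1)]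
        unfolding t_def k_def B_def by linarith
      with \<open>t > 0\<close> \<open>k > 0\<close> 3 have key: "(1 + t) ^ (n + 2) * (t * k) ^ n \<le> t\<^sup>2 * B ^ n"
        by (intro power_mult_power_le)
      have "cmod ((deriv ^^ n) (\<lambda>z. (tanh z)\<^sup>2) z) * (2 * t * k) ^ n
              \<le> K * (1 + t) ^ (n + 2) * (2 * t * k) ^ n"
        using bound \<open>t > 0\<close> \<open>k > 0\<close> by (intro mult_right_mono) auto
      also have "\<dots> = K * 2 ^ n * ((1 + t) ^ (n + 2) * (t * k) ^ n)"
        by (simp add: power_mult_distrib mult_ac)
      also have "\<dots> \<le> K * 2 ^ n * (t\<^sup>2 * B ^ n)"
        using key \<open>K \<ge> 0\<close> by (intro mult_left_mono) auto
      also have "\<dots> = K * (2 * B) ^ n * t\<^sup>2"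
        by (simp add: power_mult_distrib mult_ac)
      finally have "cmod ((deriv ^^ n) (\<lambda>z. (tanh z)\<^sup>2) z) * (2 * t * k) ^ n
          \<le> K * (2 * B) ^ n * t\<^sup>2" .
      moreover have "cmod (sinh (2 * z)) = 2 * t * k"
        unfolding t_def k_def by (rule norm_sinh_double_eq[OF nonzero(1)[OF that(2)]])
      ultimately show ?thesis
        using \<open>t > 0\<close> \<open>k > 0\<close> unfolding t_def[symmetric] by (simp add: pos_le_divide_eq)
    qed
    then show ?thesis
      by blast
  qed
qed

lemma power2_powr_half:
  fixes x :: real
  assumes "x > 0"
  shows "(x\<^sup>2) powr (real n / 2) = x ^ n"
proof -
  have "(x\<^sup>2) powr (real n / 2) = (x powr 2) powr (real n / 2)"
    using assms by (simp add: powr_realpow)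
  also have "\<dots> = x ^ n"
    using assms by (simp only: powr_powr) (simp add: powr_realpow)
  finally show ?thesis .
qed

theorem mainTheorem7:
  shows "\<forall>i j :: nat. \<exists>C :: real. \<forall>r w phi :: real.
     \<bar>r\<bar> < 1 \<and> (sinh (2*r))^2 + (sin (2*w))^2 > 0 \<longrightarrow>
     \<bar>mixed_pderiv i j (\<lambda>s v. trh_nat s v phi) r w\<bar>
       \<le> C * rho_nat r w / ((cosh (2*r))^2 - (cos (2*w))^2) powr (real (i + j) / 2)"
proof (intro allI)
  fix i j :: nat
  obtain C where C: "\<And>z. \<bar>Re z\<bar> \<le> 1 \<Longrightarrow> sinh (2 * z) \<noteq> 0 \<Longrightarrow>
      cmod ((deriv ^^ (i + j)) (\<lambda>z. (tanh z)\<^sup>2) z)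
        \<le> C * (cmod (tanh z))\<^sup>2 / (cmod (sinh (2 * z))) ^ (i + j)"
    using norm_higher_deriv_tanh_sq_le by blast
  show "\<exists>C. \<forall>r w phi. \<bar>r\<bar> < 1 \<and> (sinh (2*r))^2 + (sin (2*w))^2 > 0 \<longrightarrow>
      \<bar>mixed_pderiv i j (\<lambda>s v. trh_nat s v phi) r w\<bar>
        \<le> C * rho_nat r w / ((cosh (2*r))^2 - (cos (2*w))^2) powr (real (i + j) / 2)"
  proof (intro exI allI impI, elim conjE)
    fix r w phi :: real
    assume "\<bar>r\<bar> < 1" and pos: "(sinh (2*r))^2 + (sin (2*w))^2 > 0"
    then have "\<bar>Re (Complex r w)\<bar> \<le> 1" and nonzero: "sinh (2 * Complex r w) \<noteq> 0"
      by (simp_all add: sinh_double_Complex_nonzero_iff)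
    have "\<bar>mixed_pderiv i j (\<lambda>s v. trh_nat s v phi) r w\<bar>
        \<le> cmod (cis phi * \<i> ^ j * (deriv ^^ (i + j)) (\<lambda>z. (tanh z)\<^sup>2) (Complex r w))"
      unfolding mixed_pderiv_trh_nat[OF pos] by (rule abs_Re_le_cmod)
    also have "\<dots> = cmod ((deriv ^^ (i + j)) (\<lambda>z. (tanh z)\<^sup>2) (Complex r w))"
      by (simp add: norm_mult norm_power)
    also have "\<dots> \<le> C * rho_nat r w / (cmod (sinh (2 * Complex r w))) ^ (i + j)"
      unfolding rho_nat_eq_norm_tanh_sq by (rule C) fact+
    also have "(cmod (sinh (2 * Complex r w))) ^ (i + j)
        = ((cosh (2*r))\<^sup>2 - (cos (2*w))\<^sup>2) powr (real (i + j) / 2)"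
      using power2_powr_half[of "cmod (sinh (2 * Complex r w))" "i + j"] nonzero
      unfolding norm_sinh_double_Complex_sq by simp
    finally show "\<bar>mixed_pderiv i j (\<lambda>s v. trh_nat s v phi) r w\<bar>
        \<le> C * rho_nat r w / ((cosh (2*r))\<^sup>2 - (cos (2*w))\<^sup>2) powr (real (i + j) / 2)" .
  qed
qed

end
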